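(* There is an absolute constant $C>0$ such that for every $\varepsilon\in(0,1/2)$, every $m\geq1$ and every family of $m$ linear orders $\leq_1,\dots,\leq_m$ on a finite set $V$, the $(1/2-\varepsilon)$-majority digraph of $(\leq_1,\dots,\leq_m)$ has domination number at most $C/\varepsilon^2$.
   Context: For $c\in[0,1]$, the $c$-majority digraph of linear orders $\leq_1,\dots,\leq_m$ on $V$ is the digraph on $V$ with an arc $xy$ ($x\neq y$) whenever $|\{i\in[m]:x<_iy\}|\geq cm$. The domination number of a digraph is the minimum size of a set $X$ such that every vertex $v$ is in $X$ or has an in-neighbour in $X$. *)

theory Defs
  imports Complex_Main
begin

definition strict_lt :: "'a rel \<Rightarrow> 'a \<Rightarrow> 'a \<Rightarrow> bool" where
  "strict_lt R x y \<longleftrightarrow> (x, y) \<in> R \<and> x \<noteq> y"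

definition majority_arc :: "real \<Rightarrow> nat \<Rightarrow> (nat \<Rightarrow> 'a rel) \<Rightarrow> 'a set \<Rightarrow> 'a \<Rightarrow> 'a \<Rightarrow> bool" where
  "majority_arc c m L V x y \<longleftrightarrow> x \<in> V \<and> y \<in> V \<and> x \<noteq> y \<and>
     real (card {i. i < m \<and> strict_lt (L i) x y}) \<ge> c * real m"

definition dominating :: "'a set \<Rightarrow> ('a \<Rightarrow> 'a \<Rightarrow> bool) \<Rightarrow> 'a set \<Rightarrow> bool" where
  "dominating V E X \<longleftrightarrow> X \<subseteq> V \<and> (\<forall>v\<in>V. v \<in> X \<or> (\<exists>x\<in>X. E x v))"

definition domination_number :: "'a set \<Rightarrow> ('a \<Rightarrow> 'a \<Rightarrow> bool) \<Rightarrow> nat" where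
  "domination_number V E = (LEAST k. \<exists>X. dominating V E X \<and> card X = k)"

end

theory Submission
  imports Defs "HOL-Analysis.Convex"
begin

(*
  A symmetric zero-sum game has nonnegative value.  Here the game lets the two players
  pick x and v in V, with payoff to x the fraction of the orders that put x below v, minus
  1/2.  Approachability with the potential (the sum of squared negative parts of the
  accumulated payoffs) gives a distribution p on V under which every v has, averaged over
  the orders, at least a 1/2 - eps/2 fraction of the mass of p below it.

  Sample every x independently with probability min 1 (lam * p x), lam = 100 / eps^2, and
  give it weight lam * p x divided by that probability.  Along each order the prefix sums
  of the centred weights form a martingale, so Doob's L^2 maximal inequality bounds their
  maximum; together with the variance of the total weight and the expected sample size
  this yields a sample S of fewer than 4 lam elements whose weights deviate by less than
  lam * eps / 2 from their means, uniformly over down-sets and on average over the orders.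
  A vertex outside S that no element of S dominates would carry, below it, less than a
  1/2 - eps fraction of the sampled weight on average, contradicting the choice of p.
*)

section \<open>Symmetric games have nonnegative value\<close>

lemma sq_min_add_le:
  fixes a b :: real
  shows "(min (a + b) 0)\<^sup>2 \<le> (min a 0)\<^sup>2 + 2 * min a 0 * b + b\<^sup>2"
proof (cases "a \<le> 0")
  case True
  then have "(min (a + b) 0)\<^sup>2 \<le> (a + b)\<^sup>2"
    by (cases "a + b \<le> 0") (auto simp: min_def)
  with True show ?thesis by (simp add: min_def power2_eq_square algebra_simps)
next
  case False
  then have "(min (a + b) 0)\<^sup>2 \<le> b\<^sup>2"
    by (cases "a + b \<le> 0") (auto simp: min_def abs_le_square_iff[symmetric])
  with False show ?thesis by (simp add: min_def)
qed

locale symmetric_game =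
  fixes V :: "'a set" and G :: "'a \<Rightarrow> 'a \<Rightarrow> real"
  assumes finite_V: "finite V"
    and G_sym_nonneg: "\<And>x v. x \<in> V \<Longrightarrow> v \<in> V \<Longrightarrow> 0 \<le> G x v + G v x"
    and G_bounded: "\<And>x v. x \<in> V \<Longrightarrow> v \<in> V \<Longrightarrow> \<bar>G x v\<bar> \<le> 1"
begin

definition payoff :: "('a \<Rightarrow> real) \<Rightarrow> 'a \<Rightarrow> real" where
  "payoff p v = (\<Sum>x\<in>V. p x * G x v)"

definition deficit :: "('a \<Rightarrow> real) \<Rightarrow> real" where
  "deficit u = (\<Sum>v\<in>V. (min (u v) 0)\<^sup>2)"

lemma payoff_add: "payoff (\<lambda>x. p x + q x) v = payoff p v + payoff q v"
  unfolding payoff_def by (simp add: distrib_right sum.distrib)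

lemma abs_payoff_le:
  assumes "\<forall>x\<in>V. 0 \<le> q x" "(\<Sum>x\<in>V. q x) = 1" "v \<in> V"
  shows "\<bar>payoff q v\<bar> \<le> 1"
proof -
  have "\<bar>payoff q v\<bar> \<le> (\<Sum>x\<in>V. \<bar>q x * G x v\<bar>)"
    unfolding payoff_def by (rule sum_abs)
  also have "\<dots> \<le> (\<Sum>x\<in>V. q x)"
    using assms G_bounded by (intro sum_mono) (simp add: abs_mult mult_left_le)
  finally show ?thesis using assms(2) by simp
qed

lemma weighted_payoff_nonneg:
  assumes "\<forall>x\<in>V. 0 \<le> w x"
  shows "0 \<le> (\<Sum>v\<in>V. w v * payoff w v)"
proof -
  let ?S = "\<Sum>x\<in>V. \<Sum>v\<in>V. w x * w v * G x v"
  have swap: "?S = (\<Sum>x\<in>V. \<Sum>v\<in>V. w x * w v * G v x)"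
    by (subst sum.swap) (simp add: mult.commute mult.left_commute)
  have "0 \<le> (\<Sum>x\<in>V. \<Sum>v\<in>V. w x * w v * (G x v + G v x))"
    using assms G_sym_nonneg by (intro sum_nonneg mult_nonneg_nonneg) auto
  also have "\<dots> = 2 * ?S"
    by (subst mult_2, subst (2) swap) (simp add: sum.distrib distrib_left)
  also have "?S = (\<Sum>v\<in>V. w v * payoff w v)"
    unfolding payoff_def by (subst sum.swap) (simp add: sum_distrib_left mult_ac)
  finally show ?thesis by simp
qed

text \<open>Answering the shortfalls of \<open>u\<close> with the strategy proportional to them makes the
  cross term in the expansion of the potential nonnegative, so only the squares remain.\<close>

lemma deficit_step:
  assumes "V \<noteq> {}"
  obtains q where "\<forall>x\<in>V. 0 \<le> q x" "(\<Sum>x\<in>V. q x) = 1"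
    "deficit (\<lambda>v. u v + payoff q v) \<le> deficit u + real (card V)"
proof -
  define w where "w v = - min (u v) 0" for v
  have w_nonneg: "\<forall>x\<in>V. 0 \<le> w x" unfolding w_def by simp
  obtain q where q_nonneg: "\<forall>x\<in>V. 0 \<le> q x" and q_sum: "(\<Sum>x\<in>V. q x) = 1"
    and gain: "0 \<le> (\<Sum>v\<in>V. w v * payoff q v)"
  proof (cases "(\<Sum>x\<in>V. w x) = 0")
    case True
    then have "\<forall>v\<in>V. w v = 0" using sum_nonneg_eq_0_iff[OF finite_V] w_nonneg by blast
    moreover obtain x0 where "x0 \<in> V" using assms by blast
    ultimately show ?thesis
      using that[of "\<lambda>x. if x = x0 then 1 else 0"] finite_V by simp
  next
    case False
    define Z where "Z = (\<Sum>x\<in>V. w x)"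
    have "0 \<le> Z" unfolding Z_def using w_nonneg by (simp add: sum_nonneg)
    then have "0 < Z" using False unfolding Z_def by simp
    moreover have "(\<Sum>v\<in>V. w v * payoff (\<lambda>x. w x / Z) v) = (\<Sum>v\<in>V. w v * payoff w v) / Z"
      unfolding payoff_def by (simp add: sum_divide_distrib sum_distrib_left mult_ac)
    ultimately show ?thesis
      using that[of "\<lambda>x. w x / Z"] w_nonneg weighted_payoff_nonneg[OF w_nonneg]
      by (simp add: Z_def flip: sum_divide_distrib)
  qed
  have "deficit (\<lambda>v. u v + payoff q v)
      \<le> (\<Sum>v\<in>V. (min (u v) 0)\<^sup>2 + 2 * min (u v) 0 * payoff q v + 1)"
    unfolding deficit_def
  proof (intro sum_mono)
    fix v assume "v \<in> V"
    then have "(payoff q v)\<^sup>2 \<le> 1"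
      using abs_payoff_le[OF q_nonneg q_sum] by (simp add: abs_square_le_1)
    then show "(min (u v + payoff q v) 0)\<^sup>2 \<le> (min (u v) 0)\<^sup>2 + 2 * min (u v) 0 * payoff q v + 1"
      using sq_min_add_le[of "u v" "payoff q v"] by linarith
  qed
  also have "\<dots> = deficit u - 2 * (\<Sum>v\<in>V. w v * payoff q v) + real (card V)"
    unfolding deficit_def w_def by (simp add: sum.distrib sum_distrib_left sum_negf mult.assoc)
  finally show ?thesis using that q_nonneg q_sum gain by simp
qed

lemma exists_accumulated_strategy:
  assumes "V \<noteq> {}"
  obtains P where "\<forall>x\<in>V. 0 \<le> P x" "(\<Sum>x\<in>V. P x) = real T"
    "deficit (payoff P) \<le> real T * real (card V)"
proof (induction T arbitrary: thesis)
  case 0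
  show ?case by (rule "0"[of "\<lambda>_. 0"]) (simp_all add: deficit_def payoff_def)
next
  case (Suc T)
  obtain P where P: "\<forall>x\<in>V. 0 \<le> P x" "(\<Sum>x\<in>V. P x) = real T"
    "deficit (payoff P) \<le> real T * real (card V)"
    using Suc.IH by blast
  obtain q where q: "\<forall>x\<in>V. 0 \<le> q x" "(\<Sum>x\<in>V. q x) = 1"
    "deficit (\<lambda>v. payoff P v + payoff q v) \<le> deficit (payoff P) + real (card V)"
    using deficit_step[OF assms] by blast
  show ?case
  proof (rule Suc.prems)
    show "\<forall>x\<in>V. 0 \<le> P x + q x" using P q by simp
    show "(\<Sum>x\<in>V. P x + q x) = real (Suc T)" using P q by (simp add: sum.distrib)
    show "deficit (payoff (\<lambda>x. P x + q x)) \<le> real (Suc T) * real (card V)"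
      using P q by (simp add: payoff_add[abs_def] distrib_right)
  qed
qed

theorem exists_strategy_payoff_ge:
  assumes "V \<noteq> {}" "0 < e"
  shows "\<exists>p. (\<forall>x\<in>V. 0 \<le> p x) \<and> (\<Sum>x\<in>V. p x) = 1 \<and> (\<forall>v\<in>V. - e \<le> payoff p v)"
proof -
  define n where "n = real (card V)"
  define T where "T = nat \<lceil>n / e\<^sup>2\<rceil>"
  have "1 \<le> n" using assms(1) finite_V unfolding n_def by (simp add: Suc_le_eq card_gt_0_iff)
  have "n / e\<^sup>2 \<le> real T" unfolding T_def by (rule real_nat_ceiling_ge)
  then have "n \<le> real T * e\<^sup>2" using assms(2) by (simp add: pos_divide_le_eq)
  with \<open>1 \<le> n\<close> assms(2) have "0 < real T" by (cases "T = 0") auto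
  obtain P where P: "\<forall>x\<in>V. 0 \<le> P x" "(\<Sum>x\<in>V. P x) = real T"
    "deficit (payoff P) \<le> real T * n"
    using exists_accumulated_strategy[OF assms(1)] unfolding n_def by blast
  have "- (real T * e) \<le> payoff P v" if "v \<in> V" for v
  proof (rule ccontr)
    assume "\<not> ?thesis"
    then have "real T * e < - min (payoff P v) 0" "0 \<le> real T * e"
      using assms(2) \<open>0 < real T\<close> by auto
    then have "(real T * e)\<^sup>2 < (min (payoff P v) 0)\<^sup>2"
      using power_strict_mono[of "real T * e" "- min (payoff P v) 0" 2] by simp
    also have "\<dots> \<le> deficit (payoff P)"
      unfolding deficit_def using that finite_V by (intro member_le_sum) simp_all
    also have "\<dots> \<le> real T * (real T * e\<^sup>2)"
      using P(3) \<open>n \<le> real T * e\<^sup>2\<close> \<open>0 < real T\<close> by (meson mult_left_mono less_imp_le order_trans)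
    finally show False by (simp add: power2_eq_square algebra_simps)
  qed
  then have "\<forall>v\<in>V. - e \<le> payoff (\<lambda>x. P x / real T) v"
    using \<open>0 < real T\<close> by (simp add: payoff_def sum_divide_distrib[symmetric] field_simps)
  moreover have "(\<Sum>x\<in>V. P x / real T) = 1"
    using P(2) \<open>0 < real T\<close> by (simp flip: sum_divide_distrib)
  ultimately show ?thesis using P(1) \<open>0 < real T\<close> by (intro exI[of _ "\<lambda>x. P x / real T"]) simp
qed

end

section \<open>Majority games of linear orders\<close>

lemma sum_filter_eq_sum_card:
  fixes y :: "'a \<Rightarrow> real" and m :: nat
  assumes "finite V"
  shows "(\<Sum>i<m. \<Sum>x\<in>{x\<in>V. R i x}. y x) = (\<Sum>x\<in>V. y x * real (card {i. i < m \<and> R i x}))"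
proof -
  have card: "y x * real (card {i. i < m \<and> R i x}) = (\<Sum>i<m. if R i x then y x else 0)" for x
  proof -
    have "{i. i < m \<and> R i x} = {i\<in>{..<m}. R i x}" by auto
    then have "y x * real (card {i. i < m \<and> R i x}) = (\<Sum>i\<in>{i\<in>{..<m}. R i x}. y x)" by simp
    also have "\<dots> = (\<Sum>i<m. if R i x then y x else 0)" by (rule sum.inter_filter) simp
    finally show ?thesis .
  qed
  have "(\<Sum>i<m. \<Sum>x\<in>{x\<in>V. R i x}. y x) = (\<Sum>i<m. \<Sum>x\<in>V. if R i x then y x else 0)"
    by (rule sum.cong[OF refl]) (rule sum.inter_filter[OF assms])
  also have "\<dots> = (\<Sum>x\<in>V. \<Sum>i<m. if R i x then y x else 0)"
    by (rule sum.swap)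
  finally show ?thesis by (simp add: card)
qed

definition rank :: "'a set \<Rightarrow> 'a rel \<Rightarrow> 'a \<Rightarrow> nat" where
  "rank V R x = card {y\<in>V. (y, x) \<in> R}"

lemma linear_order_onD:
  assumes "linear_order_on V R"
  shows "x \<in> V \<Longrightarrow> (x, x) \<in> R"
    and "(x, y) \<in> R \<Longrightarrow> (y, z) \<in> R \<Longrightarrow> (x, z) \<in> R"
    and "x \<in> V \<Longrightarrow> y \<in> V \<Longrightarrow> (x, y) \<in> R \<or> (y, x) \<in> R"
proof -
  have "refl_on V R" "trans R" "total_on V R"
    using assms unfolding linear_order_on_def partial_order_on_def preorder_on_def by simp_all
  then show "x \<in> V \<Longrightarrow> (x, x) \<in> R"
    and "(x, y) \<in> R \<Longrightarrow> (y, z) \<in> R \<Longrightarrow> (x, z) \<in> R"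
    and "x \<in> V \<Longrightarrow> y \<in> V \<Longrightarrow> (x, y) \<in> R \<or> (y, x) \<in> R"
    by (auto dest: refl_onD transD simp: total_on_def) (cases "x = y", auto dest: refl_onD)
qed

lemma rank_le_rank_iff:
  assumes lin: "linear_order_on V R" and "finite V" "x \<in> V" "v \<in> V"
  shows "rank V R x \<le> rank V R v \<longleftrightarrow> (x, v) \<in> R"
proof
  assume "(x, v) \<in> R"
  then have "{y\<in>V. (y, x) \<in> R} \<subseteq> {y\<in>V. (y, v) \<in> R}"
    using linear_order_onD(2)[OF lin] by blast
  then show "rank V R x \<le> rank V R v"
    unfolding rank_def using assms(2) by (intro card_mono) auto
next
  assume le: "rank V R x \<le> rank V R v"
  show "(x, v) \<in> R"
  proof (rule ccontr)
    assume xv: "(x, v) \<notin> R"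
    then have "(v, x) \<in> R" using linear_order_onD(3)[OF lin \<open>x \<in> V\<close> \<open>v \<in> V\<close>] by blast
    then have "{y\<in>V. (y, v) \<in> R} \<subseteq> {y\<in>V. (y, x) \<in> R}"
      using linear_order_onD(2)[OF lin] by blast
    moreover have "x \<in> {y\<in>V. (y, x) \<in> R} - {y\<in>V. (y, v) \<in> R}"
      using linear_order_onD(1)[OF lin \<open>x \<in> V\<close>] xv \<open>x \<in> V\<close> by blast
    ultimately have "rank V R v < rank V R x"
      unfolding rank_def using assms(2) by (intro psubset_card_mono) auto
    with le show False by simp
  qed
qed

lemma rank_between_1_card:
  assumes lin: "linear_order_on V R" and "finite V" "v \<in> V"
  shows "1 \<le> rank V R v" "rank V R v \<le> card V"
proof -
  have "v \<in> {y\<in>V. (y, v) \<in> R}" using linear_order_onD(1)[OF lin \<open>v \<in> V\<close>] \<open>v \<in> V\<close> by blast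
  then have "0 < card {y\<in>V. (y, v) \<in> R}" using assms(2) by (auto simp: card_gt_0_iff)
  then show "1 \<le> rank V R v" unfolding rank_def by simp
  show "rank V R v \<le> card V"
    unfolding rank_def using assms(2) by (intro card_mono) auto
qed

definition order_payoff :: "nat \<Rightarrow> (nat \<Rightarrow> 'a rel) \<Rightarrow> 'a \<Rightarrow> 'a \<Rightarrow> real" where
  "order_payoff m L x v = real (card {i. i < m \<and> (x, v) \<in> L i}) / real m - 1/2"

lemma symmetric_game_order_payoff:
  assumes "finite V" "1 \<le> m" "\<forall>i<m. linear_order_on V (L i)"
  shows "symmetric_game V (order_payoff m L)"
  unfolding order_payoff_def
proof
  fix x v assume "x \<in> V" "v \<in> V"
  define a where "a x v = card {i. i < m \<and> (x, v) \<in> L i}" for x v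
  have "{..<m} \<subseteq> {i. i < m \<and> (x, v) \<in> L i} \<union> {i. i < m \<and> (v, x) \<in> L i}"
    using linear_order_onD(3)[OF assms(3)[rule_format] \<open>x \<in> V\<close> \<open>v \<in> V\<close>] by auto
  then have "card {..<m} \<le> card ({i. i < m \<and> (x, v) \<in> L i} \<union> {i. i < m \<and> (v, x) \<in> L i})"
    by (intro card_mono) auto
  also have "\<dots> \<le> a x v + a v x" unfolding a_def by (rule card_Un_le)
  finally have "1 \<le> (real (a x v) + real (a v x)) / real m"
    using assms(2) by (simp flip: of_nat_add)
  then show "0 \<le> real (a x v) / real m - 1/2 + (real (a v x) / real m - 1/2)"
    by (simp add: add_divide_distrib)
  have "a x v \<le> card {..<m}" unfolding a_def by (intro card_mono) auto
  then have "real (a x v) / real m \<le> 1" using assms(2) by simp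
  moreover have "0 \<le> real (a x v) / real m" by simp
  ultimately show "\<bar>real (a x v) / real m - 1/2\<bar> \<le> 1" unfolding abs_le_iff by linarith
qed (fact assms(1))

lemma exists_strategy_heavy_down_sets:
  assumes "finite V" "V \<noteq> {}" "1 \<le> m" "\<forall>i<m. linear_order_on V (L i)" "0 < e"
  shows "\<exists>p. (\<forall>x\<in>V. 0 \<le> p x) \<and> (\<Sum>x\<in>V. p x) = 1 \<and>
    (\<forall>v\<in>V. real m * (1/2 - e) \<le> (\<Sum>i<m. \<Sum>x\<in>{x\<in>V. (x, v) \<in> L i}. p x))"
proof -
  interpret symmetric_game V "order_payoff m L"
    using symmetric_game_order_payoff[OF assms(1,3,4)] .
  obtain p where p: "\<forall>x\<in>V. 0 \<le> p x" "(\<Sum>x\<in>V. p x) = 1" "\<forall>v\<in>V. - e \<le> payoff p v"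
    using exists_strategy_payoff_ge[OF assms(2,5)] by blast
  have "payoff p v = (\<Sum>x\<in>V. p x * real (card {i. i < m \<and> (x, v) \<in> L i})) / real m
      - (\<Sum>x\<in>V. p x) / 2" for v
    unfolding payoff_def order_payoff_def
    by (simp add: right_diff_distrib sum_subtractf sum_divide_distrib)
  then have "payoff p v = (\<Sum>i<m. \<Sum>x\<in>{x\<in>V. (x, v) \<in> L i}. p x) / real m - 1/2" for v
    using p(2) by (simp add: sum_filter_eq_sum_card[OF assms(1)])
  then have "1/2 - e \<le> (\<Sum>i<m. \<Sum>x\<in>{x\<in>V. (x, v) \<in> L i}. p x) / real m" if "v \<in> V" for v
    using p(3) that by force
  then show ?thesis
    using p(1,2) assms(3) by (intro exI[of _ p]) (simp add: le_divide_eq mult.commute)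
qed

lemma dominating_if_heavy_down_sets:
  fixes y :: "'a \<Rightarrow> real" and m :: nat
  assumes "finite V" "S \<subseteq> V" "\<forall>x\<in>V. 0 \<le> y x" "\<forall>x\<in>V - S. y x = 0"
    and heavy: "\<forall>v\<in>V - S. c * real m * (\<Sum>x\<in>V. y x) < (\<Sum>i<m. \<Sum>x\<in>{x\<in>V. (x, v) \<in> L i}. y x)"
  shows "dominating V (majority_arc c m L V) S"
  unfolding dominating_def
proof (intro conjI ballI)
  fix v assume "v \<in> V"
  show "v \<in> S \<or> (\<exists>x\<in>S. majority_arc c m L V x v)"
  proof (rule ccontr)
    assume "\<not> ?thesis"
    then have v: "v \<in> V - S" and few: "\<And>x. x \<in> S \<Longrightarrow>
        real (card {i. i < m \<and> strict_lt (L i) x v}) < c * real m"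
      using \<open>v \<in> V\<close> assms(2) unfolding majority_arc_def by (auto simp: subset_iff)
    have "(\<Sum>i<m. \<Sum>x\<in>{x\<in>V. (x, v) \<in> L i}. y x)
        = (\<Sum>x\<in>V. y x * real (card {i. i < m \<and> strict_lt (L i) x v}))"
      unfolding sum_filter_eq_sum_card[OF assms(1)]
    proof (rule sum.cong[OF refl])
      fix x assume "x \<in> V"
      show "y x * real (card {i. i < m \<and> (x, v) \<in> L i})
          = y x * real (card {i. i < m \<and> strict_lt (L i) x v})"
        using v assms(4) by (cases "x = v") (simp_all add: strict_lt_def)
    qed
    also have "\<dots> \<le> (\<Sum>x\<in>V. y x * (c * real m))"
      using few assms(3,4)
      by (intro sum_mono) (metis Diff_iff less_eq_real_def mult_left_mono mult_zero_left)
    also have "\<dots> = c * real m * (\<Sum>x\<in>V. y x)"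
      by (simp add: sum_distrib_left mult_ac)
    finally show False using heavy[rule_format, OF v] by linarith
  qed
qed (fact assms(2))

section \<open>Independent sampling\<close>

locale bernoulli_sampling =
  fixes V :: "'a set" and q :: "'a \<Rightarrow> real"
  assumes finite_V: "finite V"
    and q_nonneg: "\<And>x. x \<in> V \<Longrightarrow> 0 \<le> q x"
    and q_le_1: "\<And>x. x \<in> V \<Longrightarrow> q x \<le> 1"
begin

definition sample_prob :: "'a set \<Rightarrow> 'a set \<Rightarrow> real" where
  "sample_prob A S = (\<Prod>x\<in>S. q x) * (\<Prod>x\<in>A - S. 1 - q x)"

definition expect :: "('a set \<Rightarrow> real) \<Rightarrow> real" where
  "expect f = (\<Sum>S\<in>Pow V. sample_prob V S * f S)"

lemma sample_prob_nonneg: "S \<subseteq> V \<Longrightarrow> 0 \<le> sample_prob V S"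
  unfolding sample_prob_def using q_nonneg q_le_1
  by (intro mult_nonneg_nonneg prod_nonneg) (auto simp: subset_iff)

lemma expect_one: "expect (\<lambda>S. 1) = 1"
proof -
  have "(\<Prod>x\<in>V. q x + (1 - q x)) = (\<Sum>S\<in>Pow V. (\<Prod>x\<in>S. q x) * (\<Prod>x\<in>V - S. 1 - q x))"
    by (rule prod_add[OF finite_V])
  then show ?thesis unfolding expect_def sample_prob_def by simp
qed

lemma expect_add: "expect (\<lambda>S. f S + g S) = expect f + expect g"
  unfolding expect_def by (simp add: distrib_left sum.distrib)

lemma expect_cmult: "expect (\<lambda>S. k * f S) = k * expect f"
  unfolding expect_def by (simp add: sum_distrib_left mult_ac)

lemma expect_divide: "expect (\<lambda>S. f S / k) = expect f / k"
  unfolding expect_def by (simp add: sum_divide_distrib)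

lemma expect_const: "expect (\<lambda>S. k) = k"
  using expect_cmult[of k "\<lambda>S. 1"] expect_one by simp

lemma expect_sum: "expect (\<lambda>S. \<Sum>j\<in>J. f j S) = (\<Sum>j\<in>J. expect (f j))"
  unfolding expect_def by (simp add: sum_distrib_left sum.swap[of _ J])

lemma expect_mono: "(\<And>S. S \<subseteq> V \<Longrightarrow> f S \<le> g S) \<Longrightarrow> expect f \<le> expect g"
  unfolding expect_def using sample_prob_nonneg by (intro sum_mono mult_left_mono) auto

lemma expect_cong: "(\<And>S. S \<subseteq> V \<Longrightarrow> f S = g S) \<Longrightarrow> expect f = expect g"
  unfolding expect_def by (intro sum.cong) auto

lemma exists_lt_if_expect_lt:
  assumes "expect f < k"
  obtains S where "S \<subseteq> V" "f S < k"
proof -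
  have "\<not> (\<forall>S. S \<subseteq> V \<longrightarrow> k \<le> f S)"
  proof
    assume "\<forall>S. S \<subseteq> V \<longrightarrow> k \<le> f S"
    then have "expect (\<lambda>S. k) \<le> expect f" by (intro expect_mono) auto
    with assms show False by (simp add: expect_const)
  qed
  with that show thesis by (auto simp: not_le)
qed

lemma expect_split:
  assumes "a \<in> V"
  shows "expect F = (\<Sum>S\<in>Pow (V - {a}).
    sample_prob (V - {a}) S * ((1 - q a) * F S + q a * F (insert a S)))"
proof -
  have Pow_V: "Pow V = Pow (V - {a}) \<union> insert a ` Pow (V - {a})"
    using Pow_insert[of a "V - {a}"] assms by (simp add: insert_absorb)
  have inj: "inj_on (insert a) (Pow (V - {a}))" unfolding inj_on_def by auto
  have prob_out: "sample_prob V S = (1 - q a) * sample_prob (V - {a}) S"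
    if "S \<subseteq> V - {a}" for S
  proof -
    have "V - S = insert a ((V - {a}) - S)" using that assms by auto
    then show ?thesis unfolding sample_prob_def using finite_V by (simp add: mult_ac)
  qed
  have prob_in: "sample_prob V (insert a S) = q a * sample_prob (V - {a}) S"
    if "S \<subseteq> V - {a}" for S
  proof -
    have "V - insert a S = (V - {a}) - S" "finite S" "a \<notin> S"
      using that assms finite_V by (auto intro: finite_subset)
    then show ?thesis unfolding sample_prob_def by (simp add: mult_ac)
  qed
  have "expect F = (\<Sum>S\<in>Pow (V - {a}). sample_prob V S * F S)
      + (\<Sum>S\<in>insert a ` Pow (V - {a}). sample_prob V S * F S)"
    unfolding expect_def Pow_V using finite_V by (intro sum.union_disjoint) auto
  also have "(\<Sum>S\<in>insert a ` Pow (V - {a}). sample_prob V S * F S)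
      = (\<Sum>S\<in>Pow (V - {a}). sample_prob V (insert a S) * F (insert a S))"
    by (rule sum.reindex[OF inj, unfolded comp_def])
  finally have "expect F = (\<Sum>S\<in>Pow (V - {a}).
      sample_prob V S * F S + sample_prob V (insert a S) * F (insert a S))"
    by (simp add: sum.distrib)
  also have "\<dots> = (\<Sum>S\<in>Pow (V - {a}).
      sample_prob (V - {a}) S * ((1 - q a) * F S + q a * F (insert a S)))"
    by (rule sum.cong[OF refl]) (simp add: prob_in prob_out algebra_simps)
  finally show ?thesis .
qed

lemma expect_mult_indep:
  assumes "a \<in> V" and indep: "\<And>S. g S = g (S - {a})"
  shows "expect (\<lambda>S. g S * h (a \<in> S)) = (q a * h True + (1 - q a) * h False) * expect g"
proof -
  have g_insert: "g (insert a S) = g S" if "S \<in> Pow (V - {a})" for S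
  proof -
    have "insert a S - {a} = S" using that by auto
    then show ?thesis using indep[of "insert a S"] by simp
  qed
  have a_notin: "a \<notin> S" if "S \<in> Pow (V - {a})" for S
    using that by auto
  have "expect (\<lambda>S. g S * h (a \<in> S)) = (\<Sum>S\<in>Pow (V - {a}).
      sample_prob (V - {a}) S * ((1 - q a) * (g S * h False) + q a * (g S * h True)))"
    unfolding expect_split[OF assms(1)] by (rule sum.cong[OF refl]) (simp add: g_insert a_notin)
  also have "\<dots> = (q a * h True + (1 - q a) * h False)
      * (\<Sum>S\<in>Pow (V - {a}). sample_prob (V - {a}) S * g S)"
    by (simp add: sum_distrib_left algebra_simps)
  also have "(\<Sum>S\<in>Pow (V - {a}). sample_prob (V - {a}) S * g S) = expect g"
    unfolding expect_split[OF assms(1), of g]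
    by (rule sum.cong[OF refl]) (simp add: g_insert algebra_simps)
  finally show ?thesis .
qed

lemma expect_card: "expect (\<lambda>S. real (card S)) = (\<Sum>x\<in>V. q x)"
proof -
  have "expect (\<lambda>S. real (card S)) = expect (\<lambda>S. \<Sum>a\<in>V. 1 * (if a \<in> S then 1 else 0))"
  proof (rule expect_cong)
    fix S assume "S \<subseteq> V"
    then show "real (card S) = (\<Sum>a\<in>V. 1 * (if a \<in> S then 1 else 0))"
      using finite_V by (simp add: sum.If_cases Int_absorb1)
  qed
  also have "\<dots> = (\<Sum>a\<in>V. expect (\<lambda>S. 1 * (if a \<in> S then 1 else 0)))"
    by (rule expect_sum)
  also have "\<dots> = (\<Sum>x\<in>V. q x)"
    using expect_mult_indep[of _ "\<lambda>S. 1" "\<lambda>t. if t then 1 else 0"] expect_one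
    by (intro sum.cong refl) simp
  finally show ?thesis .
qed

end

text \<open>A discrete, pathwise form of Doob's \<open>L\<^sup>2\<close> maximal inequality: the sum on the right
  is a martingale transform, so it vanishes in expectation.\<close>

lemma running_max_sq_le:
  fixes D M :: "nat \<Rightarrow> real"
  assumes "M 0 = 0" and "\<And>t. M (Suc t) = max (M t) (D (Suc t))"
  shows "(M n)\<^sup>2 \<le> 4 * (D n)\<^sup>2 - 4 * (\<Sum>s<n. M s * (D (Suc s) - D s))"
proof -
  have invariant: "2 * (M t)\<^sup>2 \<le> 4 * M t * D t - 4 * (\<Sum>s<t. M s * (D (Suc s) - D s))" for t
  proof (induction t)
    case 0
    then show ?case using assms(1) by simp
  next
    case (Suc t)
    have "2 * (M (Suc t))\<^sup>2 - 2 * (M t)\<^sup>2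
        \<le> 4 * M (Suc t) * D (Suc t) - 4 * M t * D t - 4 * M t * (D (Suc t) - D t)"
    proof (cases "D (Suc t) \<le> M t")
      case True
      then show ?thesis using assms(2)[of t] by (simp add: algebra_simps)
    next
      case False
      then have "M (Suc t) = D (Suc t)" using assms(2)[of t] by simp
      moreover have "0 \<le> 2 * (D (Suc t) - M t)\<^sup>2" by simp
      ultimately show ?thesis by (simp add: power2_eq_square algebra_simps)
    qed
    with Suc show ?case by (simp add: algebra_simps)
  qed
  have "0 \<le> (2 * D n - M n)\<^sup>2" by simp
  with invariant[of n] show ?thesis by (simp add: power2_eq_square algebra_simps)
qed

locale weighted_sampling = bernoulli_sampling +
  fixes c :: "'a \<Rightarrow> real"
begin

definition deviation :: "'a \<Rightarrow> 'a set \<Rightarrow> real" where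
  "deviation x S = q x * c x - (if x \<in> S then c x else 0)"

lemma expect_mult_deviation:
  assumes "a \<in> V" "\<And>S. g S = g (S - {a})"
  shows "expect (\<lambda>S. g S * deviation a S) = 0"
  using expect_mult_indep[where g = g, OF assms, of "\<lambda>t. q a * c a - (if t then c a else 0)"]
  by (simp add: deviation_def algebra_simps)

lemma expect_deviation_sq:
  assumes "a \<in> V"
  shows "expect (\<lambda>S. (deviation a S)\<^sup>2) = q a * (1 - q a) * (c a)\<^sup>2"
  using expect_mult_indep[OF assms, of "\<lambda>S. 1" "\<lambda>t. (q a * c a - (if t then c a else 0))\<^sup>2"]
  by (simp add: deviation_def expect_one power2_eq_square algebra_simps)

lemma expect_sum_deviation_sq:
  assumes "A \<subseteq> V"
  shows "expect (\<lambda>S. (\<Sum>x\<in>A. deviation x S)\<^sup>2) = (\<Sum>x\<in>A. q x * (1 - q x) * (c x)\<^sup>2)"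
proof -
  have "expect (\<lambda>S. (\<Sum>x\<in>A. deviation x S)\<^sup>2)
      = (\<Sum>a\<in>A. \<Sum>b\<in>A. expect (\<lambda>S. deviation b S * deviation a S))"
    by (simp add: power2_eq_square sum_product mult.commute expect_sum)
  also have "\<dots> = (\<Sum>a\<in>A. expect (\<lambda>S. (deviation a S)\<^sup>2))"
  proof (rule sum.cong[OF refl])
    fix a assume "a \<in> A"
    have "expect (\<lambda>S. deviation b S * deviation a S) = 0" if "b \<in> A" "b \<noteq> a" for b
      using that \<open>a \<in> A\<close> assms by (intro expect_mult_deviation) (auto simp: deviation_def)
    then show "(\<Sum>b\<in>A. expect (\<lambda>S. deviation b S * deviation a S)) = expect (\<lambda>S. (deviation a S)\<^sup>2)"
      using \<open>a \<in> A\<close> finite_subset[OF assms finite_V]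
      by (simp add: sum.remove[of A a] power2_eq_square)
  qed
  also have "\<dots> = (\<Sum>x\<in>A. q x * (1 - q x) * (c x)\<^sup>2)"
    using assms by (intro sum.cong refl expect_deviation_sq) auto
  finally show ?thesis .
qed

definition prefix_deviation :: "('a \<Rightarrow> nat) \<Rightarrow> nat \<Rightarrow> 'a set \<Rightarrow> real" where
  "prefix_deviation r t S = (\<Sum>x\<in>{x\<in>V. r x \<le> t}. deviation x S)"

primrec max_prefix_deviation :: "('a \<Rightarrow> nat) \<Rightarrow> nat \<Rightarrow> 'a set \<Rightarrow> real" where
  "max_prefix_deviation r 0 S = 0"
| "max_prefix_deviation r (Suc t) S =
    max (max_prefix_deviation r t S) (prefix_deviation r (Suc t) S)"

lemma max_prefix_deviation_nonneg: "0 \<le> max_prefix_deviation r t S"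
  by (induction t) auto

lemma prefix_deviation_le_max_prefix_deviation:
  assumes "1 \<le> t" "t \<le> n"
  shows "prefix_deviation r t S \<le> max_prefix_deviation r n S"
  using assms
proof (induction n)
  case (Suc n)
  then show ?case by (cases "t = Suc n") auto
qed simp

lemma max_prefix_deviation_indep:
  "t < r a \<Longrightarrow> max_prefix_deviation r t S = max_prefix_deviation r t (S - {a})"
proof (induction t)
  case (Suc t)
  have "prefix_deviation r (Suc t) S = prefix_deviation r (Suc t) (S - {a})"
    unfolding prefix_deviation_def deviation_def using Suc.prems by (intro sum.cong refl) auto
  with Suc show ?case by simp
qed simp

lemma expect_max_prefix_deviation_mult_increment:
  "expect (\<lambda>S. max_prefix_deviation r s S
    * (prefix_deviation r (Suc s) S - prefix_deviation r s S)) = 0"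
proof -
  have layers: "{x\<in>V. r x \<le> Suc s} = {x\<in>V. r x \<le> s} \<union> {x\<in>V. r x = Suc s}" by auto
  have "prefix_deviation r (Suc s) S
      = prefix_deviation r s S + (\<Sum>a\<in>{x\<in>V. r x = Suc s}. deviation a S)" for S
    unfolding prefix_deviation_def layers by (rule sum.union_disjoint) (use finite_V in auto)
  then have "expect (\<lambda>S. max_prefix_deviation r s S
        * (prefix_deviation r (Suc s) S - prefix_deviation r s S))
      = (\<Sum>a\<in>{x\<in>V. r x = Suc s}. expect (\<lambda>S. max_prefix_deviation r s S * deviation a S))"
    by (simp add: sum_distrib_left expect_sum)
  also have "\<dots> = 0"
    by (intro sum.neutral ballI expect_mult_deviation max_prefix_deviation_indep) auto
  finally show ?thesis .
qed

lemma expect_max_prefix_deviation_sq: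
  "expect (\<lambda>S. (max_prefix_deviation r n S)\<^sup>2) \<le> 4 * (\<Sum>x\<in>V. q x * (1 - q x) * (c x)\<^sup>2)"
proof -
  have "expect (\<lambda>S. (max_prefix_deviation r n S)\<^sup>2) \<le> expect (\<lambda>S. 4 * (prefix_deviation r n S)\<^sup>2
      + (- 4) * (\<Sum>s<n. max_prefix_deviation r s S
          * (prefix_deviation r (Suc s) S - prefix_deviation r s S)))"
    using running_max_sq_le[where M = "\<lambda>t. max_prefix_deviation r t S"
        and D = "\<lambda>t. prefix_deviation r t S" for S]
    by (intro expect_mono) simp
  also have "\<dots> = 4 * expect (\<lambda>S. (prefix_deviation r n S)\<^sup>2)"
    by (simp only: expect_add expect_cmult expect_sum expect_max_prefix_deviation_mult_increment
        sum.neutral_const mult_zero_right add_0_right)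
  also have "expect (\<lambda>S. (prefix_deviation r n S)\<^sup>2)
      = (\<Sum>x\<in>{x\<in>V. r x \<le> n}. q x * (1 - q x) * (c x)\<^sup>2)"
    unfolding prefix_deviation_def by (rule expect_sum_deviation_sq) auto
  also have "\<dots> \<le> (\<Sum>x\<in>V. q x * (1 - q x) * (c x)\<^sup>2)"
    using finite_V q_nonneg q_le_1 by (intro sum_mono2) auto
  finally show ?thesis by simp
qed

end

section \<open>A small dominating set by sampling\<close>

locale majority_sampling =
  fixes V :: "'a set" and m :: nat and L :: "nat \<Rightarrow> 'a rel" and p :: "'a \<Rightarrow> real" and \<epsilon> :: real
  assumes finite_V: "finite V" and m_pos: "1 \<le> m"
    and linear_orders: "\<forall>i<m. linear_order_on V (L i)"
    and \<epsilon>_pos: "0 < \<epsilon>" and \<epsilon>_less: "\<epsilon> < 1/2"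
    and p_nonneg: "\<And>x. x \<in> V \<Longrightarrow> 0 \<le> p x" and p_sum: "(\<Sum>x\<in>V. p x) = 1"
    and heavy_down_sets:
      "\<And>v. v \<in> V \<Longrightarrow> real m * (1/2 - \<epsilon>/2) \<le> (\<Sum>i<m. \<Sum>x\<in>{x\<in>V. (x, v) \<in> L i}. p x)"
begin

definition lam :: real where
  "lam = 100 / \<epsilon>\<^sup>2"

text \<open>Each \<open>x\<close> is sampled with probability \<open>min 1 (lam * p x)\<close> and then carries weight
  \<open>c x\<close>, so that its expected weight is exactly \<open>lam * p x\<close> (for \<open>p x = 0\<close> both sides
  vanish thanks to \<open>x / 0 = 0\<close>).\<close>

definition q :: "'a \<Rightarrow> real" where
  "q x = min 1 (lam * p x)"

definition c :: "'a \<Rightarrow> real" where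
  "c x = lam * p x / q x"

lemma lam_pos: "0 < lam"
  unfolding lam_def using \<epsilon>_pos by simp

sublocale weighted_sampling V q c
  using finite_V p_nonneg lam_pos by unfold_locales (auto simp: q_def)

lemma q_times_c: "x \<in> V \<Longrightarrow> q x * c x = lam * p x"
  unfolding c_def q_def by (auto simp: min_def)

lemma c_nonneg: "x \<in> V \<Longrightarrow> 0 \<le> c x"
  unfolding c_def using q_nonneg p_nonneg lam_pos by simp

lemma variance_le: "x \<in> V \<Longrightarrow> q x * (1 - q x) * (c x)\<^sup>2 \<le> lam * p x"
proof -
  assume x: "x \<in> V"
  show ?thesis
  proof (cases "lam * p x \<le> 1")
    case True
    then have "q x = lam * p x" unfolding q_def by simp
    then have "q x * (1 - q x) * (c x)\<^sup>2 = lam * p x * (1 - lam * p x)"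
      unfolding c_def by (cases "lam * p x = 0") (simp_all add: power2_eq_square)
    also have "\<dots> \<le> lam * p x"
      using x p_nonneg lam_pos by (simp add: mult_left_le)
    finally show ?thesis .
  next
    case False
    then show ?thesis unfolding q_def using x p_nonneg lam_pos by simp
  qed
qed

lemma total_variance_le: "(\<Sum>x\<in>V. q x * (1 - q x) * (c x)\<^sup>2) \<le> lam"
proof -
  have "(\<Sum>x\<in>V. q x * (1 - q x) * (c x)\<^sup>2) \<le> (\<Sum>x\<in>V. lam * p x)"
    by (intro sum_mono variance_le)
  then show ?thesis by (simp add: p_sum flip: sum_distrib_left)
qed

definition max_deviation :: "nat \<Rightarrow> 'a set \<Rightarrow> real" where
  "max_deviation i S = max_prefix_deviation (rank V (L i)) (card V) S"

definition deviation_energy :: "'a set \<Rightarrow> real" where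
  "deviation_energy S = (\<Sum>i<m. (max_deviation i S)\<^sup>2) / real m + (\<Sum>x\<in>V. deviation x S)\<^sup>2"

lemma expect_deviation_energy_le: "expect deviation_energy \<le> 5 * lam"
proof -
  have "expect deviation_energy
      = (\<Sum>i<m. expect (\<lambda>S. (max_deviation i S)\<^sup>2)) / real m + expect (\<lambda>S. (\<Sum>x\<in>V. deviation x S)\<^sup>2)"
    unfolding deviation_energy_def by (simp add: expect_add expect_sum expect_divide)
  also have "\<dots> \<le> (\<Sum>i<m. 4 * lam) / real m + lam"
    unfolding max_deviation_def using total_variance_le expect_sum_deviation_sq[of V]
    by (intro add_mono divide_right_mono sum_mono order_trans[OF expect_max_prefix_deviation_sq])
      auto
  also have "\<dots> = 5 * lam" using m_pos by simp
  finally show ?thesis .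
qed

lemma exists_sample_small_energy:
  obtains S where "S \<subseteq> V" "deviation_energy S < 10 * lam" "real (card S) < 4 * lam"
proof -
  have "expect (\<lambda>S. deviation_energy S / (10 * lam) + real (card S) / (4 * lam))
      = expect deviation_energy / (10 * lam) + (\<Sum>x\<in>V. q x) / (4 * lam)"
    by (simp add: expect_add expect_card expect_divide)
  also have "\<dots> \<le> 5 * lam / (10 * lam) + lam / (4 * lam)"
  proof -
    have "(\<Sum>x\<in>V. q x) \<le> (\<Sum>x\<in>V. lam * p x)" unfolding q_def by (intro sum_mono) simp
    then have "(\<Sum>x\<in>V. q x) \<le> lam" by (simp add: p_sum flip: sum_distrib_left)
    then show ?thesis
      using expect_deviation_energy_le lam_pos by (intro add_mono divide_right_mono) auto
  qed
  also have "\<dots> < 1" using lam_pos by simp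
  finally obtain S where "S \<subseteq> V" "deviation_energy S / (10 * lam) + real (card S) / (4 * lam) < 1"
    by (rule exists_lt_if_expect_lt)
  moreover have "0 \<le> deviation_energy S" unfolding deviation_energy_def by (simp add: sum_nonneg)
  ultimately show ?thesis
    using that lam_pos by (smt (verit) divide_less_eq_1_pos divide_nonneg_pos of_nat_0_le_iff)
qed

lemma deviations_lt_if_energy_lt:
  assumes "deviation_energy S < 10 * lam"
  shows "(\<Sum>i<m. max_deviation i S) / real m + \<bar>\<Sum>x\<in>V. deviation x S\<bar> < lam * \<epsilon> / 2"
proof -
  define A where "A = (\<Sum>i<m. max_deviation i S) / real m"
  define B where "B = \<bar>\<Sum>x\<in>V. deviation x S\<bar>"
  have "A\<^sup>2 = (\<Sum>i<m. max_deviation i S)\<^sup>2 / (real m * real m)"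
    unfolding A_def by (simp add: power2_eq_square)
  also have "\<dots> \<le> (\<Sum>i<m. (max_deviation i S)\<^sup>2) * real m / (real m * real m)"
    using sum_squared_le_sum_of_squares[of "\<lambda>i. max_deviation i S" "{..<m}"]
    by (intro divide_right_mono) simp_all
  also have "\<dots> = (\<Sum>i<m. (max_deviation i S)\<^sup>2) / real m"
    using m_pos by simp
  finally have energy: "A\<^sup>2 + B\<^sup>2 \<le> deviation_energy S"
    unfolding deviation_energy_def B_def by simp
  have "(A + B)\<^sup>2 \<le> 2 * (A\<^sup>2 + B\<^sup>2)"
    using zero_le_power2[of "A - B"] by (simp add: power2_eq_square algebra_simps)
  also have "\<dots> \<le> 2 * deviation_energy S" using energy by simp
  also have "\<dots> < 25 * lam" using assms lam_pos by linarith
  also have "\<dots> = (lam * \<epsilon> / 2)\<^sup>2"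
    unfolding lam_def using \<epsilon>_pos by (simp add: power2_eq_square)
  finally have "(A + B)\<^sup>2 < (lam * \<epsilon> / 2)\<^sup>2" .
  moreover have "0 \<le> lam * \<epsilon> / 2" using lam_pos \<epsilon>_pos by simp
  ultimately show ?thesis
    unfolding A_def B_def by (rule power_less_imp_less_base)
qed

lemma down_set_weight_ge:
  assumes "i < m" "v \<in> V"
  shows "lam * (\<Sum>x\<in>{x\<in>V. (x, v) \<in> L i}. p x) - max_deviation i S
    \<le> (\<Sum>x\<in>{x\<in>V. (x, v) \<in> L i}. if x \<in> S then c x else 0)"
proof -
  have lin: "linear_order_on V (L i)" using linear_orders assms(1) by blast
  have down: "{x\<in>V. (x, v) \<in> L i} = {x\<in>V. rank V (L i) x \<le> rank V (L i) v}"
    using rank_le_rank_iff[OF lin finite_V _ assms(2)] by blast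
  have "(\<Sum>x\<in>{x\<in>V. (x, v) \<in> L i}. if x \<in> S then c x else 0)
      = lam * (\<Sum>x\<in>{x\<in>V. (x, v) \<in> L i}. p x) - prefix_deviation (rank V (L i)) (rank V (L i) v) S"
    unfolding prefix_deviation_def deviation_def down[symmetric]
    by (simp add: q_times_c sum_subtractf sum_distrib_left)
  moreover have "prefix_deviation (rank V (L i)) (rank V (L i) v) S \<le> max_deviation i S"
    unfolding max_deviation_def
    using rank_between_1_card[OF lin finite_V assms(2)]
    by (rule prefix_deviation_le_max_prefix_deviation)
  ultimately show ?thesis by linarith
qed

lemma dominating_if_deviations_lt:
  assumes "S \<subseteq> V"
    and small: "(\<Sum>i<m. max_deviation i S) / real m + \<bar>\<Sum>x\<in>V. deviation x S\<bar> < lam * \<epsilon> / 2"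
  shows "dominating V (majority_arc (1/2 - \<epsilon>) m L V) S"
proof (rule dominating_if_heavy_down_sets[OF finite_V assms(1)])
  define y where "y x = (if x \<in> S then c x else 0)" for x
  show "\<forall>x\<in>V. 0 \<le> y x" "\<forall>x\<in>V - S. y x = 0"
    unfolding y_def using c_nonneg by auto
  show "\<forall>v\<in>V - S. (1/2 - \<epsilon>) * real m * (\<Sum>x\<in>V. y x)
      < (\<Sum>i<m. \<Sum>x\<in>{x\<in>V. (x, v) \<in> L i}. y x)"
  proof
    fix v assume v: "v \<in> V - S"
    define B where "B = \<bar>\<Sum>x\<in>V. deviation x S\<bar>"
    define Mx where "Mx = (\<Sum>i<m. max_deviation i S)"
    have "(\<Sum>x\<in>V. y x) = lam - (\<Sum>x\<in>V. deviation x S)"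
      unfolding y_def deviation_def
      by (simp add: q_times_c sum_subtractf p_sum flip: sum_distrib_left)
    then have "(\<Sum>x\<in>V. y x) \<le> lam + B" unfolding B_def by linarith
    then have "(1/2 - \<epsilon>) * real m * (\<Sum>x\<in>V. y x) \<le> (1/2 - \<epsilon>) * real m * (lam + B)"
      using \<epsilon>_less by (intro mult_left_mono) auto
    also have "\<dots> \<le> (1/2 - \<epsilon>) * real m * lam + real m * B"
    proof -
      have "(1/2 - \<epsilon>) * (real m * B) \<le> 1 * (real m * B)"
        using \<epsilon>_pos unfolding B_def by (intro mult_right_mono) auto
      then show ?thesis by (simp add: algebra_simps)
    qed
    also have "\<dots> < (1/2 - \<epsilon>) * real m * lam + real m * (lam * \<epsilon> / 2) - Mx"
    proof -
      have "real m * (Mx / real m + B) < real m * (lam * \<epsilon> / 2)"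
        using small m_pos unfolding B_def Mx_def by (intro mult_strict_left_mono) auto
      then show ?thesis using m_pos by (simp add: algebra_simps)
    qed
    also have "\<dots> = lam * (real m * (1/2 - \<epsilon>/2)) - Mx"
      by (simp add: algebra_simps)
    also have "\<dots> \<le> lam * (\<Sum>i<m. \<Sum>x\<in>{x\<in>V. (x, v) \<in> L i}. p x) - Mx"
      using heavy_down_sets[of v] v lam_pos by simp
    also have "\<dots> = (\<Sum>i<m. lam * (\<Sum>x\<in>{x\<in>V. (x, v) \<in> L i}. p x) - max_deviation i S)"
      unfolding Mx_def by (simp add: sum_subtractf sum_distrib_left)
    also have "\<dots> \<le> (\<Sum>i<m. \<Sum>x\<in>{x\<in>V. (x, v) \<in> L i}. y x)"
      unfolding y_def using v by (intro sum_mono down_set_weight_ge) auto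
    finally show "(1/2 - \<epsilon>) * real m * (\<Sum>x\<in>V. y x) < (\<Sum>i<m. \<Sum>x\<in>{x\<in>V. (x, v) \<in> L i}. y x)" .
  qed
qed

theorem exists_small_dominating_set:
  "\<exists>S. dominating V (majority_arc (1/2 - \<epsilon>) m L V) S \<and> real (card S) \<le> 400 / \<epsilon>\<^sup>2"
proof -
  obtain S where S: "S \<subseteq> V" "deviation_energy S < 10 * lam" "real (card S) < 4 * lam"
    by (rule exists_sample_small_energy)
  have "dominating V (majority_arc (1/2 - \<epsilon>) m L V) S"
    using S(1) deviations_lt_if_energy_lt[OF S(2)] by (rule dominating_if_deviations_lt)
  moreover have "real (card S) \<le> 400 / \<epsilon>\<^sup>2" using S(3) unfolding lam_def by simp
  ultimately show ?thesis by blast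
qed

end

lemma domination_number_le_card:
  "dominating V E S \<Longrightarrow> domination_number V E \<le> card S"
  unfolding domination_number_def by (rule Least_le) blast

lemma majority_domination_number_le:
  fixes V :: "'a set"
  assumes "0 < \<epsilon>" "\<epsilon> < 1/2" "1 \<le> m" "finite V" "\<forall>i<m. linear_order_on V (L i)"
  shows "real (domination_number V (majority_arc (1/2 - \<epsilon>) m L V)) \<le> 400 / \<epsilon>\<^sup>2"
proof (cases "V = {}")
  case True
  then have "domination_number V (majority_arc (1/2 - \<epsilon>) m L V) = 0"
    using domination_number_le_card[of V _ "{}"] by (simp add: dominating_def)
  then show ?thesis by simp
next
  case False
  obtain p where "\<forall>x\<in>V. 0 \<le> p x" "(\<Sum>x\<in>V. p x) = 1"
    "\<forall>v\<in>V. real m * (1/2 - \<epsilon>/2) \<le> (\<Sum>i<m. \<Sum>x\<in>{x\<in>V. (x, v) \<in> L i}. p x)"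
    using exists_strategy_heavy_down_sets[OF assms(4) False assms(3,5), of "\<epsilon>/2"] assms(1) by auto
  then interpret majority_sampling V m L p \<epsilon>
    using assms by unfold_locales auto
  obtain S where S: "dominating V (majority_arc (1/2 - \<epsilon>) m L V) S" "real (card S) \<le> 400 / \<epsilon>\<^sup>2"
    using exists_small_dominating_set by blast
  have "real (domination_number V (majority_arc (1/2 - \<epsilon>) m L V)) \<le> real (card S)"
    using domination_number_le_card[OF S(1)] by simp
  with S(2) show ?thesis by linarith
qed

theorem theorem1p15:
  shows "\<exists>C::real. C > 0 \<and>
    (\<forall>(\<epsilon>::real) (m::nat) (V::nat set) (L::nat \<Rightarrow> nat rel).
       0 < \<epsilon> \<and> \<epsilon> < 1/2 \<and> m \<ge> 1 \<and> finite V \<and>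
       (\<forall>i<m. linear_order_on V (L i)) \<longrightarrow>
       real (domination_number V (majority_arc (1/2 - \<epsilon>) m L V)) \<le> C / \<epsilon>^2)"
  using majority_domination_number_le by (intro exI[of _ 400]) auto

end
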